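(* Let $k,s$ be positive integers with $s\equiv 0 \pmod k$ and $s\equiv 0\pmod{k+1}$, put $r=1+k+s$, and let $G=\mathbb{Z}/r\mathbb{Z}\subset SL_3(\mathbb{C})$ be the cyclic group of type $\frac1r(1,k,s)$. Let $\Sigma$ be the triangulation of the junior simplex giving the fan of $Y=G\text{-}\mathrm{Hilb}(\mathbb{C}^3)$. If a character $\chi_c$ ($c\in\{0,1,\dots,r-1\}$) marks some internal edge of $\Sigma$ (in the sense of Reid's recipe), then $c$ satisfies at least one of the following: (i) $1\le c\le k+1$; (ii) $k\mid c$; (iii) $(k+1)\mid c$.
   Context: Setup. Let $\varepsilon=e^{2\pi i/r}$ and let $G=\mathbb{Z}/r\mathbb{Z}$ act on $\mathbb{C}^3$ (coordinates $x,y,z$) via the generator $g=\mathrm{diag}(\varepsilon,\varepsilon^k,\varepsilon^s)$; this is the group "of type $\frac1r(1,k,s)$". For $c\in\mathbb{Z}/r\mathbb{Z}$ let $\chi_c:G\to\mathbb{C}^*$ be the character $g\mapsto\varepsilon^c$; a Laurent monomial $x^ay^bz^d$ is said to have character $\chi_{a+kb+sd \bmod r}$. $Y=G\text{-}\mathrm{Hilb}(\mathbb{C}^3)$ is the fine moduli space of $G$-clusters ($G$-invariant zero-dimensional subschemes $Z\subset\mathbb{C}^3$ with $H^0(\mathcal{O}_Z)$ the regular representation); it is a toric crepant resolution of $\mathbb{C}^3/G$. Toric data. Let $N=\mathbb{Z}^3+\mathbb{Z}\cdot\frac1r(1,k,s)\subset\mathbb{R}^3$ and $M=\mathrm{Hom}(N,\mathbb{Z})$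 (the lattice of exponents of $G$-invariant Laurent monomials). The junior simplex $\triangle$ is the triangle with vertices $e_x=(1,0,0),e_y=(0,1,0),e_z=(0,0,1)$; its lattice points are $e_x,e_y,e_z$ and the points $v_j=\frac1r(j\bmod r,\ kj\bmod r,\ sj\bmod r)$, $1\le j\le r-1$, whose coordinates sum to $1$. The fan of $Y$ consists of the cones over the triangles of a triangulation $\Sigma$ of $\triangle$ into basic triangles whose vertices are all lattice points of $\triangle$ (the $G$-Hilb triangulation). An edge of $\Sigma$ is internal if it is not contained in the boundary of $\triangle$. Reid's recipe (edge marking). For an internal edge with endpoints $e,f$, the rank-one sublattice of $M$ orthogonal to $e$ and $f$ is generated by the exponent vector of $m_1/m_2$ where $m_1,m_2$ are coprime (ordinary) monomials; $m_1$ and $m_2$ have the same character $\chi$, and the edge is said to be marked by $\chi$. *)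

theory Defs
  imports Complex_Main
begin

(* Integer triples: exponent vectors (a,b,d) of Laurent monomials x^a y^b z^d,
   and integer representatives r*v of lattice points v of the junior simplex. *)
type_synonym ivec = "int \<times> int \<times> int"
type_synonym rvec = "real \<times> real \<times> real"

definition rr :: "nat \<Rightarrow> nat \<Rightarrow> nat" where
  "rr k s = 1 + k + s"

definition chr :: "nat \<Rightarrow> nat \<Rightarrow> ivec \<Rightarrow> int" where
  "chr k s m = (case m of (a, b, d) \<Rightarrow> (a + int k * b + int s * d) mod int (rr k s))"

(* lattice points of the junior simplex, scaled by r so that they are integral *)
definition junior_points :: "nat \<Rightarrow> nat \<Rightarrow> ivec set" where
  "junior_points k s =
     {(int (rr k s), 0, 0), (0, int (rr k s), 0), (0, 0, int (rr k s))} \<union>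
     {(int j mod int (rr k s), (int k * int j) mod int (rr k s), (int s * int j) mod int (rr k s))
       | j. 1 \<le> j \<and> j \<le> rr k s - 1}"

definition idot :: "ivec \<Rightarrow> ivec \<Rightarrow> int" where
  "idot u v = (case u of (a, b, d) \<Rightarrow> case v of (a', b', d') \<Rightarrow> a * a' + b * b' + d * d')"

definition rdot :: "rvec \<Rightarrow> ivec \<Rightarrow> real" where
  "rdot v m = (case v of (a, b, d) \<Rightarrow> case m of (a', b', d') \<Rightarrow>
                 a * of_int a' + b * of_int b' + d * of_int d')"

definition nonneg_ivec :: "ivec \<Rightarrow> bool" where
  "nonneg_ivec m = (case m of (a, b, d) \<Rightarrow> 0 \<le> a \<and> 0 \<le> b \<and> 0 \<le> d)"

definition ile :: "ivec \<Rightarrow> ivec \<Rightarrow> bool" where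
  "ile m n = (case m of (a, b, d) \<Rightarrow> case n of (a', b', d') \<Rightarrow> a \<le> a' \<and> b \<le> b' \<and> d \<le> d')"

definition G_graph :: "nat \<Rightarrow> nat \<Rightarrow> ivec set \<Rightarrow> bool" where
  "G_graph k s \<Gamma> =
     ((\<forall>m\<in>\<Gamma>. nonneg_ivec m) \<and>
      (\<forall>m\<in>\<Gamma>. \<forall>m'. nonneg_ivec m' \<and> ile m' m \<longrightarrow> m' \<in> \<Gamma>) \<and>
      bij_betw (chr k s) \<Gamma> {0..<int (rr k s)})"

definition wt :: "nat \<Rightarrow> nat \<Rightarrow> ivec set \<Rightarrow> ivec \<Rightarrow> ivec" where
  "wt k s \<Gamma> m = (THE g. g \<in> \<Gamma> \<and> chr k s g = chr k s m)"

definition gcone :: "nat \<Rightarrow> nat \<Rightarrow> ivec set \<Rightarrow> rvec set" where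
  "gcone k s \<Gamma> = {v. (case v of (a, b, d) \<Rightarrow> 0 \<le> a \<and> 0 \<le> b \<and> 0 \<le> d) \<and>
       (\<forall>m. nonneg_ivec m \<longrightarrow> rdot v (wt k s \<Gamma> m) \<le> rdot v m)}"

definition ivec_to_rvec :: "ivec \<Rightarrow> rvec" where
  "ivec_to_rvec p = (case p of (a, b, d) \<Rightarrow> (of_int a, of_int b, of_int d))"

definition tcone :: "ivec \<Rightarrow> ivec \<Rightarrow> ivec \<Rightarrow> rvec set" where
  "tcone P Q W = {v. \<exists>\<alpha> \<beta> \<gamma> :: real. 0 \<le> \<alpha> \<and> 0 \<le> \<beta> \<and> 0 \<le> \<gamma> \<and>
       (case ivec_to_rvec P of (p1, p2, p3) \<Rightarrow> case ivec_to_rvec Q of (q1, q2, q3) \<Rightarrow>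
        case ivec_to_rvec W of (w1, w2, w3) \<Rightarrow>
          v = (\<alpha> * p1 + \<beta> * q1 + \<gamma> * w1, \<alpha> * p2 + \<beta> * q2 + \<gamma> * w2, \<alpha> * p3 + \<beta> * q3 + \<gamma> * w3))}"

definition idet :: "ivec \<Rightarrow> ivec \<Rightarrow> ivec \<Rightarrow> int" where
  "idet P Q W = (case P of (p1, p2, p3) \<Rightarrow> case Q of (q1, q2, q3) \<Rightarrow> case W of (w1, w2, w3) \<Rightarrow>
     p1 * (q2 * w3 - q3 * w2) - p2 * (q1 * w3 - q3 * w1) + p3 * (q1 * w2 - q2 * w1))"

(* triangles of the G-Hilb triangulation Sigma: the maximal cones of the fan of
   G-Hilb(C^3) are the full-dimensional cones sigma(Gamma), Gamma a G-graph *)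
definition ghilb_triangle :: "nat \<Rightarrow> nat \<Rightarrow> ivec \<Rightarrow> ivec \<Rightarrow> ivec \<Rightarrow> bool" where
  "ghilb_triangle k s P Q W =
     (P \<in> junior_points k s \<and> Q \<in> junior_points k s \<and> W \<in> junior_points k s \<and>
      idet P Q W \<noteq> 0 \<and>
      (\<exists>\<Gamma>. G_graph k s \<Gamma> \<and> gcone k s \<Gamma> = tcone P Q W))"

definition ghilb_edge :: "nat \<Rightarrow> nat \<Rightarrow> ivec \<Rightarrow> ivec \<Rightarrow> bool" where
  "ghilb_edge k s P Q = (\<exists>W. ghilb_triangle k s P Q W)"

(* an edge is internal iff it is not contained in a side of the junior simplex,
   i.e. its endpoints do not share a zero coordinate *)
definition internal_edge :: "ivec \<Rightarrow> ivec \<Rightarrow> bool" where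
  "internal_edge P Q = (case P of (p1, p2, p3) \<Rightarrow> case Q of (q1, q2, q3) \<Rightarrow>
      \<not> ((p1 = 0 \<and> q1 = 0) \<or> (p2 = 0 \<and> q2 = 0) \<or> (p3 = 0 \<and> q3 = 0)))"

definition pos_part :: "ivec \<Rightarrow> ivec" where
  "pos_part u = (case u of (a, b, d) \<Rightarrow> (max a 0, max b 0, max d 0))"

definition iscale :: "int \<Rightarrow> ivec \<Rightarrow> ivec" where
  "iscale n u = (case u of (a, b, d) \<Rightarrow> (n * a, n * b, n * d))"

(* M = invariant exponent vectors;
   u generates M \<inter> {P,Q}^perp; m1 = x^(u+), m2 = x^(u-) coprime, m1/m2 = x^u;
   the marking character is that of m1. *)
definition marks :: "nat \<Rightarrow> nat \<Rightarrow> nat \<Rightarrow> ivec \<Rightarrow> ivec \<Rightarrow> bool" where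
  "marks k s c P Q =
     (\<exists>u. u \<noteq> (0, 0, 0) \<and> chr k s u = 0 \<and> idot u P = 0 \<and> idot u Q = 0 \<and>
        (\<forall>w. chr k s w = 0 \<and> idot w P = 0 \<and> idot w Q = 0 \<longrightarrow> (\<exists>n. w = iscale n u)) \<and>
        chr k s (pos_part u) = int c)"

end

theory Submission
  imports Defs "HOL-Library.Product_Plus"
begin

text \<open>
  Let u generate the invariant exponents orthogonal to the edge PQ and split it as u = u+ - u- into
  positive and negative parts. Let PQW be a triangle of the triangulation, with G-graph \<Gamma>. Moving
  the weight P + Q slightly towards -W leaves the cone \<sigma>(\<Gamma>), so some monomial m is not the
  element g of \<Gamma> of its character for the moved weight. For a small enough move this forces P and
  Q to take the same values on m and g; so m - g is a nonzero multiple of u, and x^(u+) or x^(u-)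
  divides g and therefore lies in \<Gamma>. Hence both x^(u+) and x^(u-) minimise P and Q within their
  common character, and so do all their divisors: two divisors of equal character differ by a
  multiple of u.

  When k and k+1 divide s, the marking character is read off from the pairs x^k, y and z, y^(s/k)
  of monomials of equal character. If u+ and u- separate x from y, then either x^(u+) = x^c with
  c \<le> k, or z divides x^(u+) and x^(u-) = y^b with k b \<le> s, a multiple of k below r. Otherwise
  x^(u+) or x^(u-) is a power of z, whose character is divisible by k+1 since k+1 divides r.
\<close>

lemma chr_eq_iff_chr_diff_eq_0: "chr k s x = chr k s y \<longleftrightarrow> chr k s (x - y) = 0"
  by (cases x; cases y) (simp add: chr_def mod_eq_dvd_iff mod_eq_0_iff_dvd algebra_simps)

lemma chr_iscale_eq_0:
  assumes "chr k s u = 0" shows "chr k s (iscale n u) = 0"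
proof (cases u)
  case (fields a b d)
  have "n * a + int k * (n * b) + int s * (n * d) = n * (a + int k * b + int s * d)"
    by (simp add: algebra_simps)
  then show ?thesis
    using assms by (simp add: fields chr_def iscale_def mod_eq_0_iff_dvd)
qed

lemma chr_bounds: "0 \<le> chr k s m" "chr k s m < int (rr k s)"
  by (cases m; simp add: chr_def rr_def)+

lemma idot_commute: "idot u v = idot v u"
  by (cases u; cases v) (simp add: idot_def algebra_simps)

lemma idot_add: "idot v (x + y) = idot v x + idot v y"
  by (cases v; cases x; cases y) (simp add: idot_def algebra_simps)

lemma idot_add_left: "idot (u + v) x = idot u x + idot v x"
  by (cases u; cases v; cases x) (simp add: idot_def algebra_simps)

lemma idot_diff: "idot v (x - y) = idot v x - idot v y"
  by (cases v; cases x; cases y) (simp add: idot_def algebra_simps)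

lemma idot_iscale: "idot (iscale n u) v = n * idot u v"
  by (cases u; cases v) (simp add: idot_def iscale_def algebra_simps)

lemma idot_nonneg: "nonneg_ivec v \<Longrightarrow> nonneg_ivec m \<Longrightarrow> 0 \<le> idot v m"
  by (cases v; cases m) (simp add: idot_def nonneg_ivec_def)

lemma iscale_0: "iscale 0 u = 0"
  by (cases u) (simp add: iscale_def zero_prod_def)

lemma iscale_1: "iscale 1 u = u"
  by (cases u) (simp add: iscale_def)

lemma iscale_uminus: "iscale n (- u) = iscale (- n) u"
  by (cases u) (simp add: iscale_def)

lemma self_mem_range_iscale: "u \<in> range (\<lambda>n. iscale n u)"
  by (metis iscale_1 rangeI)

lemma pos_part_diff: "pos_part u - pos_part (- u) = u"
  by (cases u) (simp add: pos_part_def max_def)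

lemma nonneg_pos_part: "nonneg_ivec (pos_part u)"
  by (cases u) (simp add: pos_part_def nonneg_ivec_def)

lemma ile_iff_nonneg_diff: "ile x y \<longleftrightarrow> nonneg_ivec (y - x)"
  by (cases x; cases y) (auto simp: ile_def nonneg_ivec_def)

lemma le_pos_part_uminus_if_diff_eq_iscale:
  assumes "nonneg_ivec m" "nonneg_ivec g" "m - g = iscale n u" "0 < n"
  shows "ile (pos_part (- u)) g"
proof -
  have comp: "max (- ui) 0 \<le> gi" if "0 \<le> mi" "0 \<le> gi" "mi - gi = n * ui" for mi gi ui :: int
  proof (cases "ui < 0")
    case True
    then have "n * ui \<le> 1 * ui"
      using \<open>0 < n\<close> by (intro mult_right_mono_neg) auto
    with that show ?thesis by simp
  qed (use that in simp)
  obtain m1 m2 m3 g1 g2 g3 u1 u2 u3 where "m = (m1, m2, m3)" "g = (g1, g2, g3)" "u = (u1, u2, u3)"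
    by (cases m; cases g; cases u) auto
  with assms show ?thesis
    using comp[of m1 g1 u1] comp[of m2 g2 u2] comp[of m3 g3 u3]
    by (simp add: nonneg_ivec_def iscale_def pos_part_def ile_def)
qed

section \<open>Minimal monomials and G-graphs\<close>

definition char_minimal :: "nat \<Rightarrow> nat \<Rightarrow> ivec \<Rightarrow> ivec \<Rightarrow> bool" where
  "char_minimal k s v x \<longleftrightarrow>
     nonneg_ivec x \<and> (\<forall>m. nonneg_ivec m \<and> chr k s m = chr k s x \<longrightarrow> idot v x \<le> idot v m)"

lemma char_minimal_divisor:
  assumes x: "char_minimal k s v x" and y: "nonneg_ivec y" "ile y x"
  shows "char_minimal k s v y"
  unfolding char_minimal_def
proof (intro conjI allI impI)
  show "nonneg_ivec y" by (fact y(1))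
  fix m assume m: "nonneg_ivec m \<and> chr k s m = chr k s y"
  have "nonneg_ivec (m + (x - y))"
    using m y(2) by (cases m; cases x; cases y) (simp add: ile_iff_nonneg_diff nonneg_ivec_def)
  moreover have "chr k s (m + (x - y)) = chr k s x"
    using m by (simp add: chr_eq_iff_chr_diff_eq_0 algebra_simps)
  ultimately have "idot v x \<le> idot v (m + (x - y))"
    using x unfolding char_minimal_def by blast
  then show "idot v y \<le> idot v m"
    by (simp add: idot_add idot_diff)
qed

lemma char_minimal_same_value:
  "char_minimal k s v x \<Longrightarrow> char_minimal k s v y \<Longrightarrow> chr k s x = chr k s y \<Longrightarrow> idot v x = idot v y"
  unfolding char_minimal_def by (metis order_antisym)

lemma char_minimal_transfer:
  "char_minimal k s v a \<Longrightarrow> nonneg_ivec b \<Longrightarrow> chr k s b = chr k s a \<Longrightarrow> idot v b = idot v a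
    \<Longrightarrow> char_minimal k s v b"
  unfolding char_minimal_def by simp

lemma G_graph_nonneg: "G_graph k s \<Gamma> \<Longrightarrow> g \<in> \<Gamma> \<Longrightarrow> nonneg_ivec g"
  unfolding G_graph_def by blast

lemma G_graph_divisor: "G_graph k s \<Gamma> \<Longrightarrow> g \<in> \<Gamma> \<Longrightarrow> nonneg_ivec m \<Longrightarrow> ile m g \<Longrightarrow> m \<in> \<Gamma>"
  unfolding G_graph_def by blast

lemma G_graph_finite: "G_graph k s \<Gamma> \<Longrightarrow> finite \<Gamma>"
  unfolding G_graph_def using bij_betw_finite by blast

lemma wt_eqI:
  assumes "G_graph k s \<Gamma>" "g \<in> \<Gamma>" "chr k s g = chr k s m"
  shows "wt k s \<Gamma> m = g"
proof -
  have "inj_on (chr k s) \<Gamma>"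
    using assms(1) unfolding G_graph_def bij_betw_def by blast
  with assms(2,3) show ?thesis
    unfolding wt_def by (auto intro!: the_equality simp: inj_on_def)
qed

lemma wt_in_G_graph:
  assumes "G_graph k s \<Gamma>"
  shows "wt k s \<Gamma> m \<in> \<Gamma>" and "chr k s (wt k s \<Gamma> m) = chr k s m"
proof -
  have "chr k s m \<in> chr k s ` \<Gamma>"
    using assms chr_bounds[of k s m] unfolding G_graph_def bij_betw_def by auto
  then obtain g where "g \<in> \<Gamma>" "chr k s g = chr k s m" by auto
  with wt_eqI[OF assms] show "wt k s \<Gamma> m \<in> \<Gamma>" "chr k s (wt k s \<Gamma> m) = chr k s m" by auto
qed

lemma rdot_ivec_to_rvec: "rdot (ivec_to_rvec v) m = of_int (idot v m)"
  by (cases v; cases m) (simp add: rdot_def ivec_to_rvec_def idot_def)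

lemma idot_wt_le:
  assumes "ivec_to_rvec v \<in> gcone k s \<Gamma>" "nonneg_ivec m"
  shows "idot v (wt k s \<Gamma> m) \<le> idot v m"
proof -
  have "\<forall>m. nonneg_ivec m \<longrightarrow> rdot (ivec_to_rvec v) (wt k s \<Gamma> m) \<le> rdot (ivec_to_rvec v) m"
    using assms(1) unfolding gcone_def mem_Collect_eq by (rule conjunct2)
  then have "rdot (ivec_to_rvec v) (wt k s \<Gamma> m) \<le> rdot (ivec_to_rvec v) m"
    using assms(2) by blast
  then show ?thesis by (simp add: rdot_ivec_to_rvec)
qed

lemma char_minimal_if_in_G_graph:
  assumes G: "G_graph k s \<Gamma>" and g: "g \<in> \<Gamma>" and v: "ivec_to_rvec v \<in> gcone k s \<Gamma>"
  shows "char_minimal k s v g"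
  unfolding char_minimal_def
proof (intro conjI allI impI)
  show "nonneg_ivec g" using G g by (rule G_graph_nonneg)
  fix m assume m: "nonneg_ivec m \<and> chr k s m = chr k s g"
  then have "wt k s \<Gamma> m = g"
    using wt_eqI[OF G g] by simp
  then show "idot v g \<le> idot v m"
    using idot_wt_le[OF v] m by metis
qed

lemma char_minimal_pair_if_in_G_graph:
  assumes G: "G_graph k s \<Gamma>" and v: "ivec_to_rvec v \<in> gcone k s \<Gamma>"
    and ab: "nonneg_ivec a" "nonneg_ivec b" "chr k s a = chr k s b" "idot v a = idot v b"
    and "a \<in> \<Gamma> \<or> b \<in> \<Gamma>"
  shows "char_minimal k s v a \<and> char_minimal k s v b"
  using \<open>a \<in> \<Gamma> \<or> b \<in> \<Gamma>\<close>
proof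
  assume "a \<in> \<Gamma>"
  then have a_min: "char_minimal k s v a"
    by (rule char_minimal_if_in_G_graph[OF G _ v])
  with char_minimal_transfer[OF a_min ab(2) ab(3)[symmetric] ab(4)[symmetric]] show ?thesis
    by blast
next
  assume "b \<in> \<Gamma>"
  then have b_min: "char_minimal k s v b"
    by (rule char_minimal_if_in_G_graph[OF G _ v])
  with char_minimal_transfer[OF b_min ab(1,3,4)] show ?thesis
    by blast
qed

lemma pos_part_in_G_graph_if_diff_eq_iscale:
  assumes G: "G_graph k s \<Gamma>" and m: "nonneg_ivec m" and g: "g \<in> \<Gamma>"
    and n: "m - g = iscale n u" "n \<noteq> 0"
  shows "pos_part u \<in> \<Gamma> \<or> pos_part (- u) \<in> \<Gamma>"
proof -
  have g_nonneg: "nonneg_ivec g"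
    using G g by (rule G_graph_nonneg)
  have "ile (pos_part (- u)) g \<or> ile (pos_part u) g"
  proof (cases "0 < n")
    case True
    with le_pos_part_uminus_if_diff_eq_iscale[OF m g_nonneg n(1)] show ?thesis
      by blast
  next
    case False
    with n have "m - g = iscale (- n) (- u)" "0 < - n"
      by (simp_all add: iscale_uminus)
    from le_pos_part_uminus_if_diff_eq_iscale[OF m g_nonneg this] show ?thesis
      by simp
  qed
  then show ?thesis
    using G_graph_divisor[OF G g nonneg_pos_part] by blast
qed

section \<open>Crossing an edge of the triangulation\<close>

lemma junior_point_bounds:
  assumes "p \<in> junior_points k s"
  shows "nonneg_ivec p" and "ile p (int (rr k s), int (rr k s), int (rr k s))"
proof -
  have "0 < int (rr k s)" by (simp add: rr_def)
  then show "nonneg_ivec p" "ile p (int (rr k s), int (rr k s), int (rr k s))"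
    using assms unfolding junior_points_def nonneg_ivec_def ile_def by (auto simp: less_imp_le)
qed

lemma idot_junior_point_le:
  assumes W: "W \<in> junior_points k s" and m: "nonneg_ivec m" and v: "ile (1, 1, 1) v"
  shows "idot W m \<le> int (rr k s) * idot v m"
proof -
  obtain w1 w2 w3 m1 m2 m3 v1 v2 v3 where WMV: "W = (w1, w2, w3)" "m = (m1, m2, m3)" "v = (v1, v2, v3)"
    by (cases W; cases m; cases v) auto
  have le: "wi * mi \<le> int (rr k s) * (vi * mi)" if "wi \<le> int (rr k s)" "0 \<le> mi" "1 \<le> vi" for wi mi vi
  proof -
    have "wi * mi \<le> int (rr k s) * mi"
      using that by (intro mult_right_mono) auto
    also have "\<dots> \<le> int (rr k s) * (vi * mi)"
      using that by (intro mult_left_mono) (auto simp: mult_le_cancel_right1)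
    finally show ?thesis .
  qed
  have "w1 \<le> int (rr k s)" "w2 \<le> int (rr k s)" "w3 \<le> int (rr k s)"
    using junior_point_bounds(2)[OF W] by (simp_all add: WMV ile_def)
  with m v show ?thesis
    using le[of w1 m1 v1] le[of w2 m2 v2] le[of w3 m3 v3]
    by (simp add: WMV idot_def ile_def nonneg_ivec_def algebra_simps)
qed

lemma internal_edge_ge_1:
  "nonneg_ivec P \<Longrightarrow> nonneg_ivec Q \<Longrightarrow> internal_edge P Q \<Longrightarrow> ile (1, 1, 1) (P + Q)"
  by (cases P; cases Q) (auto simp: internal_edge_def nonneg_ivec_def ile_def)

lemma vertices_in_tcone: "ivec_to_rvec P \<in> tcone P Q W" "ivec_to_rvec Q \<in> tcone P Q W"
proof -
  obtain p1 p2 p3 q1 q2 q3 w1 w2 w3 where "P = (p1, p2, p3)" "Q = (q1, q2, q3)" "W = (w1, w2, w3)"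
    by (cases P; cases Q; cases W) auto
  note tcone_unfold = this tcone_def ivec_to_rvec_def mem_Collect_eq
  show "ivec_to_rvec P \<in> tcone P Q W"
    unfolding tcone_unfold by (rule exI[of _ 1], rule exI[of _ 0], rule exI[of _ 0]) simp
  show "ivec_to_rvec Q \<in> tcone P Q W"
    unfolding tcone_unfold by (rule exI[of _ 0], rule exI[of _ 1], rule exI[of _ 0]) simp
qed

lemma lincomb_eq_0_imp_det_eq_0:
  fixes x y z p1 p2 p3 q1 q2 q3 w1 w2 w3 :: real
  assumes "x * p1 + y * q1 + z * w1 = 0" "x * p2 + y * q2 + z * w2 = 0" "x * p3 + y * q3 + z * w3 = 0"
  shows "z * (p1 * (q2 * w3 - q3 * w2) - p2 * (q1 * w3 - q3 * w1) + p3 * (q1 * w2 - q2 * w1)) = 0"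
  using assms by algebra

text \<open>The W-coordinate of P + Q - \<epsilon> W in the basis P, Q, W is - \<epsilon>.\<close>

lemma edge_perturbation_notin_tcone:
  fixes \<epsilon> :: real
  assumes det: "idet (p1, p2, p3) (q1, q2, q3) (w1, w2, w3) \<noteq> 0" and \<epsilon>: "0 < \<epsilon>"
  shows "(of_int (p1 + q1) - \<epsilon> * of_int w1, of_int (p2 + q2) - \<epsilon> * of_int w2,
          of_int (p3 + q3) - \<epsilon> * of_int w3) \<notin> tcone (p1, p2, p3) (q1, q2, q3) (w1, w2, w3)"
proof
  assume "(of_int (p1 + q1) - \<epsilon> * of_int w1, of_int (p2 + q2) - \<epsilon> * of_int w2,
          of_int (p3 + q3) - \<epsilon> * of_int w3) \<in> tcone (p1, p2, p3) (q1, q2, q3) (w1, w2, w3)"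
  then obtain \<alpha> \<beta> \<gamma> :: real where "0 \<le> \<gamma>"
    and "of_int (p1 + q1) - \<epsilon> * of_int w1 = \<alpha> * p1 + \<beta> * q1 + \<gamma> * w1"
    and "of_int (p2 + q2) - \<epsilon> * of_int w2 = \<alpha> * p2 + \<beta> * q2 + \<gamma> * w2"
    and "of_int (p3 + q3) - \<epsilon> * of_int w3 = \<alpha> * p3 + \<beta> * q3 + \<gamma> * w3"
    unfolding tcone_def ivec_to_rvec_def by auto
  then have "(\<alpha> - 1) * p1 + (\<beta> - 1) * q1 + (\<gamma> + \<epsilon>) * w1 = 0"
    and "(\<alpha> - 1) * p2 + (\<beta> - 1) * q2 + (\<gamma> + \<epsilon>) * w2 = 0"
    and "(\<alpha> - 1) * p3 + (\<beta> - 1) * q3 + (\<gamma> + \<epsilon>) * w3 = 0"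
    by (simp_all add: algebra_simps)
  from lincomb_eq_0_imp_det_eq_0[OF this]
  have "(\<gamma> + \<epsilon>) * of_int (idet (p1, p2, p3) (q1, q2, q3) (w1, w2, w3)) = 0"
    by (simp add: idet_def)
  with det \<open>0 \<le> \<gamma>\<close> \<epsilon> show False by simp
qed

lemma gcone_separating_monomial:
  fixes \<epsilon> :: real
  assumes cone: "gcone k s \<Gamma> = tcone P Q W" and det: "idet P Q W \<noteq> 0"
    and W: "W \<in> junior_points k s" and PQ: "ile (1, 1, 1) (P + Q)"
    and \<epsilon>: "0 < \<epsilon>" "\<epsilon> * real (rr k s) < 1"
  obtains m where "nonneg_ivec m"
    and "of_int (idot (P + Q) m) - \<epsilon> * of_int (idot W m)
           < of_int (idot (P + Q) (wt k s \<Gamma> m)) - \<epsilon> * of_int (idot W (wt k s \<Gamma> m))"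
proof -
  obtain p1 p2 p3 q1 q2 q3 w1 w2 w3 where PQW: "P = (p1, p2, p3)" "Q = (q1, q2, q3)" "W = (w1, w2, w3)"
    by (cases P; cases Q; cases W) auto
  define ve :: rvec where "ve = (of_int (p1 + q1) - \<epsilon> * of_int w1, of_int (p2 + q2) - \<epsilon> * of_int w2,
          of_int (p3 + q3) - \<epsilon> * of_int w3)"
  have rdot_ve: "rdot ve x = of_int (idot (P + Q) x) - \<epsilon> * of_int (idot W x)" for x
    by (cases x) (simp add: ve_def PQW rdot_def idot_def algebra_simps)
  have "ve \<notin> gcone k s \<Gamma>"
    using edge_perturbation_notin_tcone[OF det[unfolded PQW] \<epsilon>(1)] cone by (simp add: ve_def PQW)
  moreover have "case ve of (a, b, d) \<Rightarrow> 0 \<le> a \<and> 0 \<le> b \<and> 0 \<le> d"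
  proof -
    have small: "\<epsilon> * of_int wi \<le> of_int vi" if "wi \<le> int (rr k s)" "1 \<le> vi" for wi vi
    proof -
      have "\<epsilon> * of_int wi \<le> \<epsilon> * real (rr k s)"
        using that \<epsilon>(1) by (intro mult_left_mono) auto
      with \<epsilon>(2) that(2) show ?thesis by linarith
    qed
    have "w1 \<le> int (rr k s)" "w2 \<le> int (rr k s)" "w3 \<le> int (rr k s)"
      using junior_point_bounds(2)[OF W] by (simp_all add: PQW ile_def)
    moreover have "1 \<le> p1 + q1" "1 \<le> p2 + q2" "1 \<le> p3 + q3"
      using PQ by (simp_all add: PQW ile_def)
    ultimately show ?thesis
      unfolding ve_def prod.case diff_ge_0_iff_ge by (blast intro: small)
  qed
  ultimately obtain m where "nonneg_ivec m" "\<not> rdot ve (wt k s \<Gamma> m) \<le> rdot ve m"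
    unfolding gcone_def mem_Collect_eq by blast
  with that show ?thesis by (simp add: rdot_ve)
qed

lemma int_le_if_gap_small:
  fixes a b K :: int
  assumes "0 \<le> K" "b \<le> K" and gap: "of_int (a - b) < of_int a / (2 * of_int (K + 1) :: real)"
  shows "a \<le> b"
proof (rule ccontr)
  assume "\<not> a \<le> b"
  have "of_int ((a - b) * (2 * (K + 1))) < (of_int a :: real)"
    using gap \<open>0 \<le> K\<close> by (simp add: pos_less_divide_eq)
  then have "(a - b) * (2 * (K + 1)) < a"
    by linarith
  moreover have "0 \<le> K * (2 * (a - b) - 1)"
    using \<open>0 \<le> K\<close> \<open>\<not> a \<le> b\<close> by simp
  ultimately show False
    using \<open>b \<le> K\<close> \<open>\<not> a \<le> b\<close> by (simp add: algebra_simps)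
qed

lemma G_graph_idot_bound:
  assumes G: "G_graph k s \<Gamma>" and v: "nonneg_ivec v"
  obtains K where "0 \<le> K" and "\<And>g. g \<in> \<Gamma> \<Longrightarrow> idot v g \<le> K"
proof
  show "0 \<le> (\<Sum>g\<in>\<Gamma>. idot v g)"
    by (intro sum_nonneg idot_nonneg v G_graph_nonneg[OF G])
  show "idot v g \<le> (\<Sum>g\<in>\<Gamma>. idot v g)" if "g \<in> \<Gamma>" for g
    using G_graph_finite[OF G] that
    by (intro member_le_sum) (auto intro: idot_nonneg v G_graph_nonneg[OF G])
qed

lemma ghilb_triangle_edge_sum_le:
  assumes G: "G_graph k s \<Gamma>" and cone: "gcone k s \<Gamma> = tcone P Q W" and det: "idet P Q W \<noteq> 0"
    and W: "W \<in> junior_points k s" and PQ: "ile (1, 1, 1) (P + Q)"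
  obtains m where "nonneg_ivec m" "wt k s \<Gamma> m \<noteq> m"
    and "idot (P + Q) m \<le> idot (P + Q) (wt k s \<Gamma> m)"
proof -
  have "nonneg_ivec (P + Q)"
    using PQ by (cases "P + Q") (simp add: ile_def nonneg_ivec_def)
  then obtain K where "0 \<le> K" and K: "\<And>g. g \<in> \<Gamma> \<Longrightarrow> idot (P + Q) g \<le> K"
    using G_graph_idot_bound[OF G] by blast
  \<comment> \<open>small enough that the W-term cannot overturn an integer inequality between values of P + Q\<close>
  define \<epsilon> :: real where "\<epsilon> = 1 / (2 * of_int (K + 1) * real (rr k s))"
  have R: "0 < real (rr k s)"
    by (simp add: rr_def)
  have "0 < \<epsilon>"
    using R \<open>0 \<le> K\<close> by (simp add: \<epsilon>_def)
  have \<epsilon>R: "\<epsilon> * real (rr k s) = 1 / (2 * of_int (K + 1))"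
    using R by (simp add: \<epsilon>_def)
  also have "\<dots> < 1"
    using \<open>0 \<le> K\<close> by simp
  finally obtain m where m: "nonneg_ivec m"
    and sep: "of_int (idot (P + Q) m) - \<epsilon> * of_int (idot W m)
           < of_int (idot (P + Q) (wt k s \<Gamma> m)) - \<epsilon> * of_int (idot W (wt k s \<Gamma> m))"
    using gcone_separating_monomial[OF cone det W PQ \<open>0 < \<epsilon>\<close>] by blast
  define g where "g = wt k s \<Gamma> m"
  have g: "g \<in> \<Gamma>" "nonneg_ivec g"
    using wt_in_G_graph(1)[OF G] G_graph_nonneg[OF G] unfolding g_def by blast+
  have "of_int (idot (P + Q) m - idot (P + Q) g) < \<epsilon> * (of_int (idot W m) - of_int (idot W g))"
    using sep by (simp add: g_def algebra_simps)
  also have "\<dots> \<le> \<epsilon> * of_int (idot W m)"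
    using \<open>0 < \<epsilon>\<close> idot_nonneg[OF junior_point_bounds(1)[OF W] g(2)] by simp
  also have "\<dots> \<le> \<epsilon> * (real (rr k s) * of_int (idot (P + Q) m))"
  proof (rule mult_left_mono)
    show "of_int (idot W m) \<le> real (rr k s) * of_int (idot (P + Q) m)"
      using idot_junior_point_le[OF W m PQ] by (metis of_int_le_iff of_int_mult of_int_of_nat_eq)
  qed (use \<open>0 < \<epsilon>\<close> in simp)
  also have "\<dots> = of_int (idot (P + Q) m) / (2 * of_int (K + 1))"
    by (simp add: \<epsilon>R flip: mult.assoc)
  finally have "idot (P + Q) m \<le> idot (P + Q) g"
    by (rule int_le_if_gap_small[OF \<open>0 \<le> K\<close> K[OF g(1)]])
  moreover have "g \<noteq> m"
    using sep unfolding g_def by auto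
  ultimately show ?thesis
    using that m unfolding g_def by blast
qed

lemma ghilb_triangle_edge_witness:
  assumes G: "G_graph k s \<Gamma>" and cone: "gcone k s \<Gamma> = tcone P Q W" and det: "idet P Q W \<noteq> 0"
    and W: "W \<in> junior_points k s" and PQ: "ile (1, 1, 1) (P + Q)"
  obtains m where "nonneg_ivec m" "wt k s \<Gamma> m \<noteq> m"
    and "idot P (wt k s \<Gamma> m) = idot P m" and "idot Q (wt k s \<Gamma> m) = idot Q m"
proof -
  obtain m where m: "nonneg_ivec m" "wt k s \<Gamma> m \<noteq> m"
    and sum_le: "idot (P + Q) m \<le> idot (P + Q) (wt k s \<Gamma> m)"
    using ghilb_triangle_edge_sum_le[OF assms] by blast
  have "ivec_to_rvec P \<in> gcone k s \<Gamma>" "ivec_to_rvec Q \<in> gcone k s \<Gamma>"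
    using vertices_in_tcone cone by simp_all
  then have "idot P (wt k s \<Gamma> m) \<le> idot P m" "idot Q (wt k s \<Gamma> m) \<le> idot Q m"
    using idot_wt_le m(1) by blast+
  with sum_le have "idot P (wt k s \<Gamma> m) = idot P m" "idot Q (wt k s \<Gamma> m) = idot Q m"
    by (simp_all add: idot_add_left)
  with m that show ?thesis
    by blast
qed

section \<open>The binomial of a marked edge\<close>

definition edge_lattice :: "nat \<Rightarrow> nat \<Rightarrow> ivec \<Rightarrow> ivec \<Rightarrow> ivec set" where
  "edge_lattice k s P Q = {w. chr k s w = 0 \<and> idot w P = 0 \<and> idot w Q = 0}"

text \<open>The exponents of the coprime monomials m1 and m2 of Reid's recipe are pos_part u and pos_part (- u).\<close>

definition edge_binomial :: "nat \<Rightarrow> nat \<Rightarrow> ivec \<Rightarrow> ivec \<Rightarrow> ivec \<Rightarrow> bool" where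
  "edge_binomial k s P Q u \<longleftrightarrow>
     edge_lattice k s P Q = range (\<lambda>n. iscale n u) \<and>
     (\<forall>v\<in>{P, Q}. char_minimal k s v (pos_part u) \<and> char_minimal k s v (pos_part (- u)))"

lemma diff_in_edge_lattice_iff:
  "x - y \<in> edge_lattice k s P Q \<longleftrightarrow> chr k s x = chr k s y \<and> idot P x = idot P y \<and> idot Q x = idot Q y"
  by (auto simp: edge_lattice_def chr_eq_iff_chr_diff_eq_0 idot_commute[of "x - y"] idot_diff)

lemma pos_parts_if_in_edge_lattice:
  assumes "u \<in> edge_lattice k s P Q"
  shows "chr k s (pos_part u) = chr k s (pos_part (- u))"
    and "idot P (pos_part u) = idot P (pos_part (- u))" and "idot Q (pos_part u) = idot Q (pos_part (- u))"
  using assms diff_in_edge_lattice_iff[of "pos_part u" "pos_part (- u)"] by (simp_all add: pos_part_diff)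

lemma edge_lattice_eq_range_iscale:
  assumes "u \<in> edge_lattice k s P Q" and "edge_lattice k s P Q \<subseteq> range (\<lambda>n. iscale n u)"
  shows "edge_lattice k s P Q = range (\<lambda>n. iscale n u)"
  using assms by (auto simp: edge_lattice_def chr_iscale_eq_0 idot_iscale)

lemma marks_edge_lattice_generator:
  assumes "marks k s c P Q"
  obtains u where "edge_lattice k s P Q = range (\<lambda>n. iscale n u)" and "chr k s (pos_part u) = int c"
proof -
  obtain u where "u \<in> edge_lattice k s P Q" "edge_lattice k s P Q \<subseteq> range (\<lambda>n. iscale n u)"
    and "chr k s (pos_part u) = int c"
    using assms unfolding marks_def edge_lattice_def by blast
  with that show thesis
    using edge_lattice_eq_range_iscale by blast
qed

lemma ghilb_edge_binomial:
  assumes edge: "ghilb_edge k s P Q" and internal: "internal_edge P Q"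
    and u: "edge_lattice k s P Q = range (\<lambda>n. iscale n u)"
  shows "edge_binomial k s P Q u"
proof -
  obtain W \<Gamma> where P: "P \<in> junior_points k s" and Q: "Q \<in> junior_points k s"
    and W: "W \<in> junior_points k s" and det: "idet P Q W \<noteq> 0"
    and G: "G_graph k s \<Gamma>" and cone: "gcone k s \<Gamma> = tcone P Q W"
    using edge unfolding ghilb_edge_def ghilb_triangle_def by blast
  have "ile (1, 1, 1) (P + Q)"
    using internal_edge_ge_1[OF junior_point_bounds(1)[OF P] junior_point_bounds(1)[OF Q] internal] .
  then obtain m where m: "nonneg_ivec m" and g_ne: "wt k s \<Gamma> m \<noteq> m"
    and g_PQ: "idot P (wt k s \<Gamma> m) = idot P m" "idot Q (wt k s \<Gamma> m) = idot Q m"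
    using ghilb_triangle_edge_witness[OF G cone det W] by blast
  define g where "g = wt k s \<Gamma> m"
  have g: "g \<in> \<Gamma>" "chr k s g = chr k s m"
    unfolding g_def by (rule wt_in_G_graph[OF G])+
  have "m - g \<in> edge_lattice k s P Q"
    using g(2) g_PQ unfolding g_def diff_in_edge_lattice_iff by simp
  then obtain n where n: "m - g = iscale n u"
    using u by auto
  have "n \<noteq> 0"
    using n g_ne unfolding g_def by (auto simp: iscale_0)
  with G m g(1) n have in_G: "pos_part u \<in> \<Gamma> \<or> pos_part (- u) \<in> \<Gamma>"
    by (rule pos_part_in_G_graph_if_diff_eq_iscale)
  have "u \<in> edge_lattice k s P Q"
    unfolding u by (rule self_mem_range_iscale)
  note pos_parts = pos_parts_if_in_edge_lattice[OF this]
  have "char_minimal k s v (pos_part u) \<and> char_minimal k s v (pos_part (- u))" if v: "v \<in> {P, Q}" for v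
  proof (rule char_minimal_pair_if_in_G_graph[OF G _ nonneg_pos_part nonneg_pos_part _ _ in_G])
    show "ivec_to_rvec v \<in> gcone k s \<Gamma>"
      using v vertices_in_tcone[where P = P and Q = Q and W = W] cone by auto
    show "chr k s (pos_part u) = chr k s (pos_part (- u))"
      "idot v (pos_part u) = idot v (pos_part (- u))"
      using v pos_parts by auto
  qed
  with u show ?thesis
    unfolding edge_binomial_def by blast
qed

lemma edge_binomial_in_edge_lattice: "edge_binomial k s P Q u \<Longrightarrow> u \<in> edge_lattice k s P Q"
  unfolding edge_binomial_def using self_mem_range_iscale by blast

lemma edge_binomial_uminus:
  assumes "edge_binomial k s P Q u"
  shows "edge_binomial k s P Q (- u)"
proof -
  have "range (\<lambda>n. iscale n (- u)) = (\<lambda>n. iscale n u) ` range uminus"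
    by (simp only: iscale_uminus image_image)
  also have "\<dots> = range (\<lambda>n. iscale n u)"
    by simp
  finally have "range (\<lambda>n. iscale n (- u)) = range (\<lambda>n. iscale n u)" .
  with assms show ?thesis
    unfolding edge_binomial_def by auto
qed

lemma edge_binomial_divisors_diff:
  assumes u: "edge_binomial k s P Q u"
    and a: "nonneg_ivec a" "ile a (pos_part u)" and b: "nonneg_ivec b" "ile b (pos_part (- u))"
    and ab: "chr k s a = chr k s b"
  obtains n where "a - b = iscale n u"
proof -
  have "idot v a = idot v b" if "v \<in> {P, Q}" for v
  proof (rule char_minimal_same_value[OF _ _ ab])
    show "char_minimal k s v a" "char_minimal k s v b"
      using u that char_minimal_divisor[OF _ a] char_minimal_divisor[OF _ b]
      unfolding edge_binomial_def by blast+
  qed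
  with ab have "a - b \<in> edge_lattice k s P Q"
    by (simp add: diff_in_edge_lattice_iff)
  with u that show thesis
    unfolding edge_binomial_def by auto
qed

section \<open>The marking characters\<close>

definition admissible_char :: "nat \<Rightarrow> int \<Rightarrow> bool" where
  "admissible_char k c \<longleftrightarrow> (1 \<le> c \<and> c \<le> int k + 1) \<or> int k dvd c \<or> int (k + 1) dvd c"

lemma chr_z_power_dvd:
  assumes "(k + 1) dvd s"
  shows "int (k + 1) dvd chr k s (0, 0, d)"
proof -
  have "int (rr k s) = int (k + 1) + int s"
    by (simp add: rr_def)
  then have "int (k + 1) dvd int (rr k s)"
    using assms by (simp only: dvd_add_right_iff dvd_refl int_dvd_int_iff)
  moreover have "int (k + 1) dvd int s * d"
    using assms by (metis int_dvd_int_iff dvd_mult2)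
  ultimately show ?thesis
    by (simp add: chr_def dvd_mod_iff)
qed

lemma edge_binomial_char_bounds_if_pure_x:
  assumes u: "edge_binomial k s P Q (u1, u2, u3)" and "0 < u1" "u2 < 0" "u3 \<le> 0"
  shows "1 \<le> chr k s (pos_part (u1, u2, u3)) \<and> chr k s (pos_part (u1, u2, u3)) \<le> int k"
proof -
  have A: "pos_part (u1, u2, u3) = (u1, 0, 0)" and B: "pos_part (- u1, - u2, - u3) = (0, - u2, - u3)"
    using assms by (simp_all add: pos_part_def)
  have "u1 \<le> int k"
  proof (rule ccontr)
    assume "\<not> u1 \<le> int k"
    then have "ile (int k, 0, 0) (pos_part (u1, u2, u3))" "ile (0, 1, 0) (pos_part (- (u1, u2, u3)))"
      using \<open>u2 < 0\<close> \<open>u3 \<le> 0\<close> by (simp_all add: A B ile_def)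
    moreover have "chr k s (int k, 0, 0) = chr k s (0, 1, 0)"
      by (simp add: chr_def)
    moreover have "nonneg_ivec (int k, 0, 0)" "nonneg_ivec (0, 1, 0)"
      by (simp_all add: nonneg_ivec_def)
    ultimately obtain n where "(int k, 0, 0) - (0, 1, 0) = iscale n (u1, u2, u3)"
      using edge_binomial_divisors_diff[OF u] by blast
    then have "int k = n * u1" "n * - u2 = 1"
      by (simp_all add: iscale_def)
    moreover from this(2) \<open>u2 < 0\<close> have "n = 1"
      using zmult_eq_1_iff[of n "- u2"] by auto
    ultimately have "u1 = int k"
      by simp
    with \<open>\<not> u1 \<le> int k\<close> show False
      by simp
  qed
  with \<open>0 < u1\<close> show ?thesis
    by (simp add: A chr_def rr_def)
qed

lemma edge_binomial_k_dvd_char_if_z: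
  assumes "k dvd s" and u: "edge_binomial k s P Q (u1, u2, u3)" and "0 < u1" "u2 < 0" "0 < u3"
  shows "int k dvd chr k s (pos_part (u1, u2, u3))"
proof -
  have A: "pos_part (u1, u2, u3) = (u1, 0, u3)" and B: "pos_part (- u1, - u2, - u3) = (0, - u2, 0)"
    using assms by (simp_all add: pos_part_def)
  obtain T where T: "s = k * T"
    using \<open>k dvd s\<close> by blast
  have "int k * - u2 \<le> int s"
  proof (rule ccontr)
    assume "\<not> int k * - u2 \<le> int s"
    then have "int k * int T < int k * - u2"
      by (simp add: T)
    then have "int T < - u2"
      by (meson mult_left_mono not_less of_nat_0_le_iff)
    then have "ile (0, 0, 1) (pos_part (u1, u2, u3))" "ile (0, int T, 0) (pos_part (- (u1, u2, u3)))"
      using \<open>0 < u1\<close> \<open>0 < u3\<close> by (simp_all add: A B ile_def)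
    moreover have "chr k s (0, 0, 1) = chr k s (0, int T, 0)"
      by (simp add: chr_def T)
    moreover have "nonneg_ivec (0, 0, 1)" "nonneg_ivec (0, int T, 0)"
      by (simp_all add: nonneg_ivec_def)
    ultimately obtain n where "(0, 0, 1) - (0, int T, 0) = iscale n (u1, u2, u3)"
      using edge_binomial_divisors_diff[OF u] by blast
    then have "0 = n * u1" "1 = n * u3"
      by (simp_all add: iscale_def)
    with \<open>0 < u1\<close> show False
      by simp
  qed
  moreover have "0 \<le> int k * - u2"
    using \<open>u2 < 0\<close> by (simp add: mult_nonneg_nonpos)
  ultimately have "chr k s (0, - u2, 0) = int k * - u2"
    by (simp add: chr_def rr_def)
  moreover have "chr k s (pos_part (u1, u2, u3)) = chr k s (0, - u2, 0)"
    using pos_parts_if_in_edge_lattice(1)[OF edge_binomial_in_edge_lattice[OF u]] by (simp add: B)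
  ultimately show ?thesis
    by simp
qed

lemma edge_binomial_admissible_char:
  assumes "k dvd s" "(k + 1) dvd s" and u: "edge_binomial k s P Q u"
  shows "admissible_char k (chr k s (pos_part u))"
proof -
  have mixed: "admissible_char k (chr k s (pos_part (v1, v2, v3)))"
    if v: "edge_binomial k s P Q (v1, v2, v3)" "0 < v1" "v2 < 0" for v1 v2 v3
  proof (cases "v3 \<le> 0")
    case True
    with edge_binomial_char_bounds_if_pure_x[OF v] show ?thesis
      by (simp add: admissible_char_def)
  next
    case False
    with edge_binomial_k_dvd_char_if_z[OF \<open>k dvd s\<close> v] show ?thesis
      by (simp add: admissible_char_def)
  qed
  have swap: "chr k s (pos_part (- u)) = chr k s (pos_part u)"
    using pos_parts_if_in_edge_lattice(1)[OF edge_binomial_in_edge_lattice[OF u]] by simp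
  obtain u1 u2 u3 where u_eq: "u = (u1, u2, u3)"
    by (cases u) auto
  consider "0 < u1" "u2 < 0" | "u1 < 0" "0 < u2" | "0 \<le> u1" "0 \<le> u2" | "u1 \<le> 0" "u2 \<le> 0"
    by linarith
  then show ?thesis
  proof cases
    case 1
    with mixed u show ?thesis
      unfolding u_eq by blast
  next
    case 2
    with mixed[of "- u1" "- u2" "- u3"] edge_binomial_uminus[OF u] swap show ?thesis
      unfolding u_eq by simp
  next
    case 3
    then have "pos_part (- u) = (0, 0, max (- u3) 0)"
      by (simp add: u_eq pos_part_def)
    with chr_z_power_dvd[OF \<open>(k + 1) dvd s\<close>] swap show ?thesis
      unfolding admissible_char_def by metis
  next
    case 4
    then have "pos_part u = (0, 0, max u3 0)"
      by (simp add: u_eq pos_part_def)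
    with chr_z_power_dvd[OF \<open>(k + 1) dvd s\<close>] show ?thesis
      unfolding admissible_char_def by metis
  qed
qed

theorem theorem5p3:
  fixes k s c :: nat and P Q :: ivec
  assumes "0 < k" and "0 < s" and "k dvd s" and "(k + 1) dvd s"
    and "c < rr k s"
    and "ghilb_edge k s P Q" and "internal_edge P Q"
    and "marks k s c P Q"
  shows "(1 \<le> c \<and> c \<le> k + 1) \<or> k dvd c \<or> (k + 1) dvd c"
proof -
  obtain u where u: "edge_lattice k s P Q = range (\<lambda>n. iscale n u)"
    and c: "chr k s (pos_part u) = int c"
    using marks_edge_lattice_generator[OF assms(8)] .
  have "edge_binomial k s P Q u"
    using ghilb_edge_binomial[OF assms(6,7) u] .
  with c have "admissible_char k (int c)"
    using edge_binomial_admissible_char[OF assms(3,4)] by metis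
  then show ?thesis
    unfolding admissible_char_def by (simp only: of_nat_dvd_iff) linarith
qed

end
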